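(* Let $Q$ be a completely semisimple inverse semigroup satisfying the ascending chain condition on the $\leq_{\mathcal{J}}$-order of its $\mathcal{J}$-classes. Then every left I-order in $Q$ is straight.
   Context: For an element $a$ of an inverse semigroup $Q$, $a^{-1}$ is its unique inverse. A subsemigroup $S$ of $Q$ is a left I-order in $Q$ if every $q\in Q$ can be written $q=a^{-1}b$ with $a,b\in S$; it is straight if $a,b$ can always be chosen with $a\,\mathcal{R}\,b$ in $Q$. An inverse semigroup is completely semisimple if no two distinct idempotents $e>f$ (in the natural order) are $\mathcal{D}$-related (equivalently, every principal factor is completely simple or completely 0-simple). The ascending chain condition on the $\leq_{\mathcal{J}}$-order means there is no infinite strictly ascending chain $J_1<J_2<\cdots$ of $\mathcal{J}$-classes, where $J_a\leq J_b$ iff $Q^1aQ^1\subseteq Q^1bQ^1$. *)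

theory Defs
  imports Main
begin

text \<open>The inverse semigroup Q is the whole carrier of a type of class semigroup_mult.\<close>

definition inverse_semigroup :: "'a::semigroup_mult itself \<Rightarrow> bool" where
  "inverse_semigroup _ \<longleftrightarrow> (\<forall>a::'a. \<exists>!b. a * b * a = a \<and> b * a * b = b)"

definition sinv :: "'a::semigroup_mult \<Rightarrow> 'a" where
  "sinv a = (THE b. a * b * a = a \<and> b * a * b = b)"

definition idem :: "'a::semigroup_mult \<Rightarrow> bool" where
  "idem e \<longleftrightarrow> e * e = e"

definition nat_le :: "'a::semigroup_mult \<Rightarrow> 'a \<Rightarrow> bool" where
  "nat_le a b \<longleftrightarrow> (\<exists>e. idem e \<and> a = e * b)"

text \<open>Principal right/left/two-sided ideals in Q^1.\<close>
definition rideal1 :: "'a::semigroup_mult \<Rightarrow> 'a set" where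
  "rideal1 a = insert a {a * x | x. True}"
definition lideal1 :: "'a::semigroup_mult \<Rightarrow> 'a set" where
  "lideal1 a = insert a {x * a | x. True}"
definition ideal1 :: "'a::semigroup_mult \<Rightarrow> 'a set" where
  "ideal1 a = {a} \<union> {x * a | x. True} \<union> {a * y | y. True} \<union> {x * a * y | x y. True}"

definition greenR :: "'a::semigroup_mult \<Rightarrow> 'a \<Rightarrow> bool" where
  "greenR a b \<longleftrightarrow> rideal1 a = rideal1 b"
definition greenL :: "'a::semigroup_mult \<Rightarrow> 'a \<Rightarrow> bool" where
  "greenL a b \<longleftrightarrow> lideal1 a = lideal1 b"
definition greenD :: "'a::semigroup_mult \<Rightarrow> 'a \<Rightarrow> bool" where
  "greenD a b \<longleftrightarrow> (\<exists>c. greenR a c \<and> greenL c b)"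

definition J_le :: "'a::semigroup_mult \<Rightarrow> 'a \<Rightarrow> bool" where
  "J_le a b \<longleftrightarrow> ideal1 a \<subseteq> ideal1 b"
definition J_less :: "'a::semigroup_mult \<Rightarrow> 'a \<Rightarrow> bool" where
  "J_less a b \<longleftrightarrow> J_le a b \<and> \<not> J_le b a"

definition completely_semisimple :: "'a::semigroup_mult itself \<Rightarrow> bool" where
  "completely_semisimple _ \<longleftrightarrow>
     \<not> (\<exists>e f :: 'a. idem e \<and> idem f \<and> nat_le f e \<and> f \<noteq> e \<and> greenD e f)"

definition J_acc :: "'a::semigroup_mult itself \<Rightarrow> bool" where
  "J_acc _ \<longleftrightarrow> \<not> (\<exists>s :: nat \<Rightarrow> 'a. \<forall>n. J_less (s n) (s (Suc n)))"

definition subsemigroup :: "'a::semigroup_mult set \<Rightarrow> bool" where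
  "subsemigroup S \<longleftrightarrow> (\<forall>a\<in>S. \<forall>b\<in>S. a * b \<in> S)"

definition left_I_order :: "'a::semigroup_mult set \<Rightarrow> bool" where
  "left_I_order S \<longleftrightarrow> subsemigroup S \<and> (\<forall>q. \<exists>a\<in>S. \<exists>b\<in>S. q = sinv a * b)"

definition straight_left_I_order :: "'a::semigroup_mult set \<Rightarrow> bool" where
  "straight_left_I_order S \<longleftrightarrow> left_I_order S \<and>
     (\<forall>q. \<exists>a\<in>S. \<exists>b\<in>S. q = sinv a * b \<and> greenR a b)"

end

theory Submission
  imports Defs
begin

text \<open>
  Write \<open>q = a\<inverse> b\<close> with \<open>a, b \<in> S\<close>. It suffices to find \<open>s \<in> S\<close> with
  \<open>s\<inverse> s = a a\<inverse> b b\<inverse>\<close>: then \<open>q = (s a)\<inverse> (s b)\<close>, and \<open>s a\<close>, \<open>s b\<close> are both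
  \<open>\<R>\<close>-related to \<open>s s\<inverse>\<close>. That every idempotent \<open>e\<close> of \<open>Q\<close> has the form \<open>s\<inverse> s\<close>
  with \<open>s \<in> S\<close> is proved by induction upwards along the \<open>\<J>\<close>-order, which is well
  founded by the ascending chain condition. Write \<open>e = a\<inverse> b\<close>; then
  \<open>e = a\<inverse> (b b\<inverse>) a\<close> lies \<open>\<J>\<close>-below \<open>b b\<inverse>\<close>. If strictly below, the induction
  hypothesis gives \<open>t \<in> S\<close> with \<open>t\<inverse> t = b b\<inverse>\<close>, and then \<open>e = (t a)\<inverse> (t a)\<close>.
  Otherwise \<open>e\<close> is \<open>\<J>\<close>-equivalent to \<open>b\<inverse> b \<ge> e\<close>, and complete semisimplicity
  forces \<open>e = b\<inverse> b\<close>.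
\<close>

lemma greenR_intro: "a = b * x \<Longrightarrow> b = a * y \<Longrightarrow> greenR a b"
  unfolding greenR_def rideal1_def by (auto simp: mult.assoc) (metis mult.assoc)+

lemma greenL_intro: "a = x * b \<Longrightarrow> b = y * a \<Longrightarrow> greenL a b"
  unfolding greenL_def lideal1_def by (auto simp: mult.assoc[symmetric]) (metis mult.assoc)+

lemma J_le_idem_iff:
  assumes "idem e"
  shows "J_le a e \<longleftrightarrow> (\<exists>x y. a = x * e * y)"
proof
  have "e = e * e * e" "\<And>x. x * e = x * e * e" "\<And>y. e * y = e * e * y"
    using assms by (simp_all add: idem_def mult.assoc)
  then show "J_le a e \<Longrightarrow> \<exists>x y. a = x * e * y"
    unfolding J_le_def ideal1_def by blast
  show "\<exists>x y. a = x * e * y \<Longrightarrow> J_le a e"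
    unfolding J_le_def ideal1_def by (auto simp: mult.assoc) (metis mult.assoc)+
qed

lemma wf_J_greater:
  assumes "J_acc TYPE('a::semigroup_mult)"
  shows "wf {(b :: 'a, a). J_less a b}"
  using assms unfolding J_acc_def wf_iff_no_infinite_down_chain by auto

context
  assumes inverse_semigroup: "inverse_semigroup TYPE('a::semigroup_mult)"
begin

lemma sinv_ex1: "\<exists>!b. (a::'a) * b * a = a \<and> b * a * b = b"
  using inverse_semigroup by (simp add: inverse_semigroup_def)

lemma sinv_unique: "(a::'a) * b * a = a \<Longrightarrow> b * a * b = b \<Longrightarrow> sinv a = b"
  unfolding sinv_def by (rule the1_equality[OF sinv_ex1]) simp

lemma mult_sinv_mult [simp]: "(a::'a) * (sinv a * a) = a"
  and sinv_mult_sinv [simp]: "sinv a * (a * sinv a) = sinv a"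
  using theI'[OF sinv_ex1[of a]] unfolding sinv_def[symmetric] by (simp_all add: mult.assoc)

lemma mult_sinv_mult_assoc [simp]: "(a::'a) * (sinv a * (a * x)) = a * x"
  by (metis mult_sinv_mult mult.assoc)

lemma sinv_mult_sinv_assoc [simp]: "sinv (a::'a) * (a * (sinv a * x)) = sinv a * x"
  by (metis sinv_mult_sinv mult.assoc)

lemma sinv_sinv [simp]: "sinv (sinv (a::'a)) = a"
  by (rule sinv_unique) (simp_all add: mult.assoc)

lemma idem_mult_sinv [simp]: "idem ((a::'a) * sinv a)"
  and idem_sinv_mult [simp]: "idem (sinv a * a)"
  unfolding idem_def by (simp_all add: mult.assoc)

lemma sinv_idem: "idem (e::'a) \<Longrightarrow> sinv e = e"
  by (rule sinv_unique) (simp_all add: idem_def)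

lemma idem_mult:
  assumes "idem (e::'a)" "idem f"
  shows "idem (e * f)"
proof -
  have e: "e * (e * z) = e * z" and f: "f * (f * z) = f * z" for z
    using assms by (simp_all add: idem_def mult.assoc[symmetric])
  define x where "x = sinv (e * f)"
  have x1: "e * (f * (x * (e * f))) = e * f" and x2: "x * (e * (f * x)) = x"
    using mult_sinv_mult[of "e * f"] sinv_mult_sinv[of "e * f"] unfolding x_def
    by (simp_all only: mult.assoc)
  have x2_assoc: "x * (e * (f * (x * z))) = x * z" for z
    using x2 by (metis mult.assoc)
  \<comment> \<open>\<open>f x e\<close> is also an inverse of \<open>e f\<close>, so \<open>x = f x e\<close>, which makes \<open>x\<close> idempotent.\<close>
  have "sinv (e * f) = f * x * e"
    by (rule sinv_unique) (simp_all add: mult.assoc e f x1 x2_assoc)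
  then have x_eq: "x = f * x * e"
    unfolding x_def .
  have "x * x = f * x * e * (f * x * e)"
    by (metis x_eq)
  also have "\<dots> = f * (x * (e * (f * x))) * e"
    by (simp add: mult.assoc)
  also have "\<dots> = x"
    by (simp add: x2 flip: x_eq)
  finally have "idem x"
    unfolding idem_def .
  then have "e * f = x"
    using sinv_idem x_def by force
  with \<open>idem x\<close> show ?thesis
    by simp
qed

lemma idem_mult_commute:
  assumes "idem (e::'a)" "idem f"
  shows "e * f = f * e"
proof -
  have e: "e * (e * z) = e * z" and f: "f * (f * z) = f * z" for z
    using assms by (simp_all add: idem_def mult.assoc[symmetric])
  have ef: "e * (f * (e * f)) = e * f" and fe: "f * (e * (f * e)) = f * e"
    using idem_mult[OF assms] idem_mult[OF assms(2,1)] by (simp_all add: idem_def mult.assoc)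
  have "sinv (e * f) = f * e"
    by (rule sinv_unique) (simp_all add: mult.assoc e f ef fe)
  then show ?thesis
    using sinv_idem[OF idem_mult[OF assms]] by simp
qed

lemma sinv_mult_distrib: "sinv ((a::'a) * b) = sinv b * sinv a"
proof (rule sinv_unique)
  have comm: "b * (sinv b * (sinv a * (a * z))) = sinv a * (a * (b * (sinv b * z)))" for z
    using idem_mult_commute[of "b * sinv b" "sinv a * a"] by (simp add: mult.assoc[symmetric])
  show "a * b * (sinv b * sinv a) * (a * b) = a * b"
    by (simp add: mult.assoc comm)
  show "sinv b * sinv a * (a * b) * (sinv b * sinv a) = sinv b * sinv a"
    by (simp add: mult.assoc comm[symmetric])
qed

lemma greenR_mult_sinv: "greenR ((a::'a) * sinv a) a"
  by (rule greenR_intro[where x = "sinv a" and y = a]) (simp_all add: mult.assoc)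

lemma greenL_sinv_mult: "greenL (a::'a) (sinv a * a)"
  by (rule greenL_intro[where x = a and y = "sinv a"]) (simp_all add: mult.assoc)

lemma greenD_mult_sinv_sinv_mult: "greenD ((a::'a) * sinv a) (sinv a * a)"
  unfolding greenD_def using greenR_mult_sinv greenL_sinv_mult by blast

lemma greenR_if_mult_sinv_eq:
  assumes "(a::'a) * sinv a = b * sinv b"
  shows "greenR a b"
proof (rule greenR_intro)
  have "a = a * sinv a * a" and "b = b * sinv b * b"
    by (simp_all add: mult.assoc)
  then show "a = b * (sinv b * a)" and "b = a * (sinv a * b)"
    by (simp_all only: assms flip: mult.assoc)
qed

lemma mult_sinv_of_sinv_mult_le:
  assumes "sinv s * s * ((a::'a) * sinv a) = sinv s * s"
  shows "s * a * sinv (s * a) = s * sinv s"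
proof -
  have "s * a * sinv (s * a) = s * (sinv s * s * (a * sinv a)) * sinv s"
    by (simp add: sinv_mult_distrib mult.assoc)
  also have "\<dots> = s * sinv s"
    using assms by (simp add: mult.assoc)
  finally show ?thesis .
qed

lemma completely_semisimple_idem_eq:
  assumes "completely_semisimple TYPE('a)"
    and f: "idem (f::'a)" and g: "idem g" and "f * g = f" and "J_le g f"
  shows "f = g"
proof -
  obtain x y where gxy: "g = x * f * y"
    using \<open>J_le g f\<close> J_le_idem_iff[OF f] by blast
  \<comment> \<open>\<open>u = g x f\<close> has \<open>u u\<inverse> = g\<close> and \<open>u\<inverse> u \<le> f\<close>, so \<open>g\<close> is \<open>\<D>\<close>-related to an idempotent below \<open>f\<close>.\<close>
  define u where "u = g * x * f"
  define h where "h = sinv u * u"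
  have f_assoc: "f * (f * z) = f * z" and g_assoc: "g * (g * z) = g * z" for z
    using f g by (simp_all add: idem_def mult.assoc[symmetric])
  have gxy_assoc: "x * (f * (y * z)) = g * z" for z
    using gxy by (simp add: mult.assoc)
  have gu: "g * u = u" and uf: "u * f = u"
    using f g unfolding u_def idem_def by (simp_all add: mult.assoc g_assoc)
  have u_right: "u * (f * (y * g)) = g"
    using g unfolding u_def idem_def by (simp add: mult.assoc f_assoc gxy_assoc g_assoc)
  have "u * sinv u = g * (u * sinv u)"
    using gu by (simp flip: mult.assoc)
  also have "\<dots> = u * sinv u * g"
    using idem_mult_commute[OF g idem_mult_sinv] .
  also have "\<dots> = u * sinv u * (u * (f * (y * g)))"
    by (simp only: u_right)
  also have "\<dots> = u * (f * (y * g))"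
    by (simp only: mult.assoc mult_sinv_mult_assoc)
  also have "\<dots> = g"
    by (rule u_right)
  finally have "u * sinv u = g" .
  then have "greenD g h"
    using greenD_mult_sinv_sinv_mult[of u] unfolding h_def by simp
  moreover have "nat_le h g"
  proof -
    have "u * g = u"
      using uf \<open>f * g = f\<close> by (metis mult.assoc)
    then have "h = h * g"
      unfolding h_def by (simp add: mult.assoc)
    then show ?thesis
      unfolding nat_le_def h_def using idem_sinv_mult by blast
  qed
  ultimately have "h = g"
    using assms(1) g idem_sinv_mult[of u] unfolding completely_semisimple_def h_def by blast
  then have "g * f = g"
    using uf unfolding h_def by (metis mult.assoc)
  then show ?thesis
    using \<open>f * g = f\<close> idem_mult_commute[OF f g] by simp
qed

lemma idem_eq_sinv_mult_self_if_not_J_less: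
  assumes "completely_semisimple TYPE('a)"
    and e: "idem (e::'a)" and e_eq: "e = sinv a * b" and not_less: "\<not> J_less e (b * sinv b)"
  shows "e = sinv b * b"
proof (rule completely_semisimple_idem_eq[OF assms(1) e idem_sinv_mult])
  show "e * (sinv b * b) = e"
    using e_eq by (simp add: mult.assoc)
  have "e = sinv a * (b * sinv b) * b"
    using e_eq by (simp add: mult.assoc)
  then have "J_le e (b * sinv b)"
    using J_le_idem_iff[OF idem_mult_sinv] by blast
  with not_less obtain x y where "b * sinv b = x * e * y"
    using J_le_idem_iff[OF e] unfolding J_less_def by blast
  have "sinv b * b = sinv b * (b * sinv b) * b"
    by (simp add: mult.assoc)
  also have "\<dots> = (sinv b * x) * e * (y * b)"
    using \<open>b * sinv b = x * e * y\<close> by (simp add: mult.assoc)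
  finally show "J_le (sinv b * b) e"
    using J_le_idem_iff[OF e] by blast
qed

lemma left_I_order_idem_eq_sinv_mult_self:
  assumes "completely_semisimple TYPE('a)" and "J_acc TYPE('a)"
    and S: "left_I_order (S::'a set)" and "idem e"
  shows "\<exists>d\<in>S. sinv d * d = e"
  using \<open>idem e\<close>
proof (induction e rule: wf_induct_rule[OF wf_J_greater[OF assms(2)]])
  case (1 e)
  obtain a b where "a \<in> S" "b \<in> S" and e_eq: "e = sinv a * b"
    using S unfolding left_I_order_def by blast
  show ?case
  proof (cases "J_less e (b * sinv b)")
    case True
    obtain t where "t \<in> S" and t: "sinv t * t = b * sinv b"
      using "1.IH"[of "b * sinv b"] True by auto
    have "t * a \<in> S"
      using S \<open>t \<in> S\<close> \<open>a \<in> S\<close> unfolding left_I_order_def subsemigroup_def by blast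
    have "e = e * sinv e"
      using sinv_idem "1.prems" by (simp add: idem_def)
    also have "\<dots> = sinv a * (b * sinv b) * a"
      using e_eq by (simp add: sinv_mult_distrib mult.assoc)
    also have "\<dots> = sinv (t * a) * (t * a)"
      using t by (simp add: sinv_mult_distrib mult.assoc flip: t)
    finally show ?thesis
      using \<open>t * a \<in> S\<close> by metis
  next
    case False
    then show ?thesis
      using idem_eq_sinv_mult_self_if_not_J_less[OF assms(1) "1.prems" e_eq] \<open>b \<in> S\<close> by metis
  qed
qed

lemma straightening_by_sinv_mult_self:
  assumes s: "sinv s * s = (a::'a) * sinv a * (b * sinv b)"
  shows "sinv (s * a) * (s * b) = sinv a * b" and "greenR (s * a) (s * b)"
proof -
  have s_assoc: "sinv s * (s * z) = a * (sinv a * (b * (sinv b * z)))" for z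
    using s by (metis mult.assoc)
  show "sinv (s * a) * (s * b) = sinv a * b"
    by (simp add: sinv_mult_distrib mult.assoc s_assoc)
  have "sinv s * s * (a * sinv a) = sinv s * s"
    using s idem_mult_commute[of "a * sinv a" "b * sinv b"] by (simp add: mult.assoc)
  moreover have "sinv s * s * (b * sinv b) = sinv s * s"
    using s by (simp add: mult.assoc)
  ultimately show "greenR (s * a) (s * b)"
    by (simp add: greenR_if_mult_sinv_eq mult_sinv_of_sinv_mult_le)
qed

end

theorem theorem2p4:
  fixes S :: "'a::semigroup_mult set"
  assumes "inverse_semigroup TYPE('a)"
    and "completely_semisimple TYPE('a)"
    and "J_acc TYPE('a)"
    and "left_I_order S"
  shows "straight_left_I_order S"
  unfolding straight_left_I_order_def
proof (intro conjI allI assms(4))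
  fix q :: 'a
  obtain a b where "a \<in> S" "b \<in> S" and q: "q = sinv a * b"
    using assms(4) unfolding left_I_order_def by blast
  have "idem (a * sinv a * (b * sinv b))"
    using assms(1) by (simp add: idem_mult)
  then obtain s where "s \<in> S" and s: "sinv s * s = a * sinv a * (b * sinv b)"
    using left_I_order_idem_eq_sinv_mult_self[OF assms] by blast
  have "s * a \<in> S" "s * b \<in> S"
    using assms(4) \<open>s \<in> S\<close> \<open>a \<in> S\<close> \<open>b \<in> S\<close> unfolding left_I_order_def subsemigroup_def by blast+
  with straightening_by_sinv_mult_self[OF assms(1) s] q
  show "\<exists>c\<in>S. \<exists>d\<in>S. q = sinv c * d \<and> greenR c d"
    by metis
qed

end
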